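(* The categories $\sigma\ell\mathbb{G}_u$ and $\mathcal{V}_{\sigma\ell\mathbb{G}_u}$ are isomorphic via the functor $U_u\colon\mathcal{V}_{\sigma\ell\mathbb{G}_u}\to\sigma\ell\mathbb{G}_u$ that forgets $\bigvee^-$ (keeping the $\ell$-group operations and interpreting the constant $1$ as the designated weak unit; identity on maps) and the functor $F_u\colon\sigma\ell\mathbb{G}_u\to\mathcal{V}_{\sigma\ell\mathbb{G}_u}$ that adds the operation $\bigvee^-(g,f_1,f_2,\dots):=\sup_{n\ge1}\{f_n\wedge g\}$ and interprets $1$ as the designated weak unit (identity on maps); both are well defined and mutually inverse. In particular the category of Dedekind $\sigma$-complete $\ell$-groups with weak unit is an infinitary variety. An element $1$ of an $\ell$-group $G$ is a weak (order) unit if $1\ge0$ and for all $f\in G$, $f\wedge1=0$ implies $f=0$. Dedekind $\sigma$-complete: every countable subset with an upper bound has a supremum. $\sigma$-continuous: preserves all existing countable suprema. $\sigma\ell\mathbb{G}_u$ is the category of Dedekind $\sigma$-complete $\ell$-groups with a designated weak unit, with $\sigma$-continuous $\ell$-morphisms preserving the designated weak unit. $\mathcal{V}_{\sigma\ell\mathbb{G}}$ is the variety of algebras $(G,0,+,-,\vee,\wedge,\bigvee^-)$, $\bigvee^-$ of countably infinite arity with $\bigvee_{n\ge1}^g f_n:=\bigvee^-(g,f_1,f_2,\dots)$, satisfying the $\ell$-group axioms and (A1) $\bigvee_{n\ge1}^g f_n=\bigvee_{n\ge1}^g(f_n\wedge g)$; (A2) $\bigvee_{n\ge1}^g f_n=(f_1\wedge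 g)\vee\bigvee^-(g,f_2,f_3,\dots)$; (A3) $\bigvee_{n\ge1}^g(f_n\wedge h)\le h$ ($a\le b$ meaning $a\wedge b=a$). $\mathcal{V}_{\sigma\ell\mathbb{G}_u}$ is the variety in the language of $\mathcal{V}_{\sigma\ell\mathbb{G}}$ plus a constant $1$, axiomatized by the axioms of $\mathcal{V}_{\sigma\ell\mathbb{G}}$ together with $\bigvee_{n\ge1}^{|f|}(|f|\wedge n1)=|f|$; its morphisms preserve all operations including $1$. *)

theory Defs
  imports Main
begin

text \<open>Objects are algebras whose carrier is a whole HOL type 'a (the theorem is
schematic in the types, so this ranges over all carriers).\<close>

record 'a lgu =
  zer :: 'a
  pls :: "'a \<Rightarrow> 'a \<Rightarrow> 'a"
  ng  :: "'a \<Rightarrow> 'a"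
  jn  :: "'a \<Rightarrow> 'a \<Rightarrow> 'a"
  mt  :: "'a \<Rightarrow> 'a \<Rightarrow> 'a"
  unt :: 'a

record 'a vslu = "'a lgu" +
  bigv :: "'a \<Rightarrow> (nat \<Rightarrow> 'a) \<Rightarrow> 'a"
  \<comment> \<open>bigv g f = bigvee-minus(g, f 0, f 1, ...), i.e. f 0 plays the role of f_1\<close>

definition lgroup_ax :: "('a, 'm) lgu_scheme \<Rightarrow> bool" where
  "lgroup_ax G \<longleftrightarrow>
     (\<forall>x y z. pls G (pls G x y) z = pls G x (pls G y z)) \<and>
     (\<forall>x. pls G (zer G) x = x \<and> pls G x (zer G) = x) \<and>
     (\<forall>x. pls G (ng G x) x = zer G \<and> pls G x (ng G x) = zer G) \<and>
     (\<forall>x y. jn G x y = jn G y x \<and> mt G x y = mt G y x) \<and>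
     (\<forall>x y z. jn G (jn G x y) z = jn G x (jn G y z) \<and> mt G (mt G x y) z = mt G x (mt G y z)) \<and>
     (\<forall>x y. jn G x (mt G x y) = x \<and> mt G x (jn G x y) = x) \<and>
     (\<forall>x y z. pls G x (jn G y z) = jn G (pls G x y) (pls G x z) \<and>
              pls G (jn G y z) x = jn G (pls G y x) (pls G z x))"

definition leq :: "('a, 'm) lgu_scheme \<Rightarrow> 'a \<Rightarrow> 'a \<Rightarrow> bool" where
  "leq G x y \<longleftrightarrow> mt G x y = x"

definition absv :: "('a, 'm) lgu_scheme \<Rightarrow> 'a \<Rightarrow> 'a" where
  "absv G x = jn G x (ng G x)"

definition nsmul :: "('a, 'm) lgu_scheme \<Rightarrow> nat \<Rightarrow> 'a \<Rightarrow> 'a" where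
  "nsmul G n x = (pls G x ^^ n) (zer G)"

definition is_sup :: "('a, 'm) lgu_scheme \<Rightarrow> 'a set \<Rightarrow> 'a \<Rightarrow> bool" where
  "is_sup G S s \<longleftrightarrow> (\<forall>x\<in>S. leq G x s) \<and> (\<forall>u. (\<forall>x\<in>S. leq G x u) \<longrightarrow> leq G s u)"

text \<open>Dedekind sigma-complete: every nonempty countable subset (= range of a
sequence) which is bounded above has a supremum.\<close>
definition sigma_complete :: "('a, 'm) lgu_scheme \<Rightarrow> bool" where
  "sigma_complete G \<longleftrightarrow>
     (\<forall>f :: nat \<Rightarrow> 'a. (\<exists>u. \<forall>n. leq G (f n) u) \<longrightarrow> (\<exists>s. is_sup G (range f) s))"

definition weak_unit :: "('a, 'm) lgu_scheme \<Rightarrow> 'a \<Rightarrow> bool" where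
  "weak_unit G u \<longleftrightarrow> leq G (zer G) u \<and> (\<forall>f. mt G f u = zer G \<longrightarrow> f = zer G)"

definition sigma_obj :: "'a lgu \<Rightarrow> bool" where
  "sigma_obj G \<longleftrightarrow> lgroup_ax G \<and> sigma_complete G \<and> weak_unit G (unt G)"

definition lmorph :: "('a, 'm) lgu_scheme \<Rightarrow> ('b, 'n) lgu_scheme \<Rightarrow> ('a \<Rightarrow> 'b) \<Rightarrow> bool" where
  "lmorph G H h \<longleftrightarrow>
     (\<forall>x y. h (pls G x y) = pls H (h x) (h y) \<and> h (jn G x y) = jn H (h x) (h y)
            \<and> h (mt G x y) = mt H (h x) (h y))"

definition sigma_cont :: "('a, 'm) lgu_scheme \<Rightarrow> ('b, 'n) lgu_scheme \<Rightarrow> ('a \<Rightarrow> 'b) \<Rightarrow> bool" where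
  "sigma_cont G H h \<longleftrightarrow>
     (\<forall>(f :: nat \<Rightarrow> 'a) s. is_sup G (range f) s \<longrightarrow> is_sup H (range (h \<circ> f)) (h s))"

definition sigma_mor :: "'a lgu \<Rightarrow> 'b lgu \<Rightarrow> ('a \<Rightarrow> 'b) \<Rightarrow> bool" where
  "sigma_mor G H h \<longleftrightarrow> lmorph G H h \<and> sigma_cont G H h \<and> h (unt G) = unt H"

definition vobj :: "'a vslu \<Rightarrow> bool" where
  "vobj A \<longleftrightarrow> lgroup_ax A \<and>
     (\<forall>g f. bigv A g f = bigv A g (\<lambda>n. mt A (f n) g)) \<and>
     (\<forall>g f. bigv A g f = jn A (mt A (f 0) g) (bigv A g (\<lambda>n. f (Suc n)))) \<and>
     (\<forall>g f h. leq A (bigv A g (\<lambda>n. mt A (f n) h)) h) \<and>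
     (\<forall>f. bigv A (absv A f) (\<lambda>n. mt A (absv A f) (nsmul A (Suc n) (unt A))) = absv A f)"

definition vmor :: "'a vslu \<Rightarrow> 'b vslu \<Rightarrow> ('a \<Rightarrow> 'b) \<Rightarrow> bool" where
  "vmor A B h \<longleftrightarrow>
     h (zer A) = zer B \<and> h (unt A) = unt B \<and>
     (\<forall>x y. h (pls A x y) = pls B (h x) (h y)) \<and>
     (\<forall>x. h (ng A x) = ng B (h x)) \<and>
     (\<forall>x y. h (jn A x y) = jn B (h x) (h y)) \<and>
     (\<forall>x y. h (mt A x y) = mt B (h x) (h y)) \<and>
     (\<forall>g f. h (bigv A g f) = bigv B (h g) (h \<circ> f))"

definition Uu :: "'a vslu \<Rightarrow> 'a lgu" where
  "Uu A = \<lparr>zer = zer A, pls = pls A, ng = ng A, jn = jn A, mt = mt A, unt = unt A\<rparr>"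

definition Fu :: "'a lgu \<Rightarrow> 'a vslu" where
  "Fu G = \<lparr>zer = zer G, pls = pls G, ng = ng G, jn = jn G, mt = mt G, unt = unt G,
           bigv = (\<lambda>g f. THE s. is_sup G (range (\<lambda>n. mt G (f n) g)) s)\<rparr>"

end

theory Submission
  imports Defs
begin

text \<open>Bounded by g, the meets f n \<sqinter> g always have a supremum in a Dedekind
\<sigma>-complete \<ell>-group, and A1--A3 say exactly that the infinitary operation returns this
supremum; so the operation is determined by the order, which makes the two functors
inverse on objects and makes \<sigma>-continuity equivalent to preserving the operation.
The unit axiom corresponds to the designated element being a weak unit. If 1 is a weak
unit and a \<ge> 0 with s = sup (a \<sqinter> n1), then c(n+1) = a \<sqinter> (c(n) + 1) for c(n) = a \<sqinter> n1
yields c(n) + ((a - s) \<sqinter> 1) \<le> s for all n, hence (a - s) \<sqinter> 1 = 0 and a = s. Conversely,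
if every |f| is the supremum of |f| \<sqinter> n1, then the negative part of 1, being disjoint
from all multiples of the positive part, vanishes, and f \<sqinter> 1 = 0 makes f disjoint from
all n1, so f = 0.\<close>

locale lattice_group =
  fixes zero :: 'a ("\<zero>")
    and plus :: "'a \<Rightarrow> 'a \<Rightarrow> 'a" (infixl "\<oplus>" 65)
    and neg :: "'a \<Rightarrow> 'a"
    and join :: "'a \<Rightarrow> 'a \<Rightarrow> 'a" (infixl "\<squnion>" 60)
    and meet :: "'a \<Rightarrow> 'a \<Rightarrow> 'a" (infixl "\<sqinter>" 61)
  assumes add_assoc: "(x \<oplus> y) \<oplus> w = x \<oplus> (y \<oplus> w)"
    and add_0_left: "\<zero> \<oplus> x = x" and add_0_right: "x \<oplus> \<zero> = x"
    and neg_add_cancel: "neg x \<oplus> x = \<zero>" and add_neg_cancel: "x \<oplus> neg x = \<zero>"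
    and join_comm: "x \<squnion> y = y \<squnion> x" and meet_comm: "x \<sqinter> y = y \<sqinter> x"
    and join_assoc: "(x \<squnion> y) \<squnion> w = x \<squnion> (y \<squnion> w)"
    and meet_assoc: "(x \<sqinter> y) \<sqinter> w = x \<sqinter> (y \<sqinter> w)"
    and join_meet_absorb: "x \<squnion> (x \<sqinter> y) = x" and meet_join_absorb: "x \<sqinter> (x \<squnion> y) = x"
    and add_join_distrib_left: "x \<oplus> (y \<squnion> w) = (x \<oplus> y) \<squnion> (x \<oplus> w)"
    and add_join_distrib_right: "(y \<squnion> w) \<oplus> x = (y \<oplus> x) \<squnion> (w \<oplus> x)"
begin

definition le (infix "\<preceq>" 50) where "x \<preceq> y \<longleftrightarrow> x \<sqinter> y = x"

lemma meet_idem: "x \<sqinter> x = x" by (metis join_meet_absorb meet_join_absorb)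
lemma join_idem: "x \<squnion> x = x" by (metis join_meet_absorb meet_join_absorb)
lemma le_iff_join: "x \<preceq> y \<longleftrightarrow> x \<squnion> y = y"
  unfolding le_def by (metis join_meet_absorb meet_join_absorb join_comm meet_comm)
lemma le_refl [simp]: "x \<preceq> x" by (simp add: le_def meet_idem)
lemma le_antisym: "x \<preceq> y \<Longrightarrow> y \<preceq> x \<Longrightarrow> x = y" unfolding le_def by (metis meet_comm)
lemma le_trans [trans]: "x \<preceq> y \<Longrightarrow> y \<preceq> w \<Longrightarrow> x \<preceq> w" unfolding le_def by (metis meet_assoc)
lemma meet_le1: "x \<sqinter> y \<preceq> x" unfolding le_def by (metis meet_assoc meet_comm meet_idem)
lemma meet_le2: "x \<sqinter> y \<preceq> y" unfolding le_def by (metis meet_assoc meet_idem)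
lemma meet_greatest: "w \<preceq> x \<Longrightarrow> w \<preceq> y \<Longrightarrow> w \<preceq> x \<sqinter> y" unfolding le_def by (metis meet_assoc)
lemma join_ge1: "x \<preceq> x \<squnion> y" unfolding le_iff_join by (metis join_assoc join_idem)
lemma join_ge2: "y \<preceq> x \<squnion> y" unfolding le_iff_join by (metis join_assoc join_idem join_comm)
lemma join_least: "x \<preceq> w \<Longrightarrow> y \<preceq> w \<Longrightarrow> x \<squnion> y \<preceq> w" unfolding le_iff_join by (metis join_assoc)
lemma le_meet_iff: "w \<preceq> x \<sqinter> y \<longleftrightarrow> w \<preceq> x \<and> w \<preceq> y"
  by (meson le_trans meet_le1 meet_le2 meet_greatest)
lemma join_le_iff: "x \<squnion> y \<preceq> w \<longleftrightarrow> x \<preceq> w \<and> y \<preceq> w"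
  by (meson le_trans join_ge1 join_ge2 join_least)

lemma add_left_cancel: "a \<oplus> x = a \<oplus> y \<Longrightarrow> x = y"
  by (metis add_assoc neg_add_cancel add_0_left)
lemma add_right_cancel: "x \<oplus> a = y \<oplus> a \<Longrightarrow> x = y"
  by (metis add_assoc add_neg_cancel add_0_right)
lemma neg_neg [simp]: "neg (neg x) = x"
  by (metis add_right_cancel neg_add_cancel add_neg_cancel)
lemma neg_zero [simp]: "neg \<zero> = \<zero>" by (metis neg_add_cancel add_0_right)

lemma add_left_mono: "x \<preceq> y \<Longrightarrow> a \<oplus> x \<preceq> a \<oplus> y"
  unfolding le_iff_join by (metis add_join_distrib_left)
lemma add_right_mono: "x \<preceq> y \<Longrightarrow> x \<oplus> a \<preceq> y \<oplus> a"
  unfolding le_iff_join by (metis add_join_distrib_right)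
lemma add_mono: "x \<preceq> y \<Longrightarrow> x' \<preceq> y' \<Longrightarrow> x \<oplus> x' \<preceq> y \<oplus> y'"
  by (meson le_trans add_left_mono add_right_mono)
lemma add_le_add_left_iff: "a \<oplus> x \<preceq> a \<oplus> y \<longleftrightarrow> x \<preceq> y"
  by (metis add_assoc neg_add_cancel add_left_mono add_0_left)

lemma neg_le_neg: "x \<preceq> y \<Longrightarrow> neg y \<preceq> neg x"
proof -
  assume "x \<preceq> y"
  hence "neg y \<oplus> x \<oplus> neg x \<preceq> neg y \<oplus> y \<oplus> neg x"
    by (metis add_left_mono add_right_mono add_assoc)
  thus ?thesis by (metis add_assoc neg_add_cancel add_neg_cancel add_0_left add_0_right)
qed
lemma neg_le_neg_iff: "neg y \<preceq> neg x \<longleftrightarrow> x \<preceq> y" by (metis neg_le_neg neg_neg)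

lemma add_meet_distrib_left: "a \<oplus> (x \<sqinter> y) = (a \<oplus> x) \<sqinter> (a \<oplus> y)"
proof (rule le_antisym)
  show "a \<oplus> (x \<sqinter> y) \<preceq> (a \<oplus> x) \<sqinter> (a \<oplus> y)"
    by (simp add: le_meet_iff meet_le1 meet_le2 add_left_mono)
  have "(a \<oplus> x) \<sqinter> (a \<oplus> y) = a \<oplus> (neg a \<oplus> ((a \<oplus> x) \<sqinter> (a \<oplus> y)))"
    by (metis add_assoc add_neg_cancel add_0_left)
  also have "neg a \<oplus> ((a \<oplus> x) \<sqinter> (a \<oplus> y)) \<preceq> x \<sqinter> y"
    by (metis add_assoc le_meet_iff meet_le1 meet_le2 neg_add_cancel add_left_mono add_0_left)
  hence "a \<oplus> (neg a \<oplus> ((a \<oplus> x) \<sqinter> (a \<oplus> y))) \<preceq> a \<oplus> (x \<sqinter> y)" by (rule add_left_mono)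
  finally show "(a \<oplus> x) \<sqinter> (a \<oplus> y) \<preceq> a \<oplus> (x \<sqinter> y)" by simp
qed

lemma add_meet_distrib_right: "(x \<sqinter> y) \<oplus> a = (x \<oplus> a) \<sqinter> (y \<oplus> a)"
proof (rule le_antisym)
  show "(x \<sqinter> y) \<oplus> a \<preceq> (x \<oplus> a) \<sqinter> (y \<oplus> a)"
    by (simp add: le_meet_iff meet_le1 meet_le2 add_right_mono)
  have "(x \<oplus> a) \<sqinter> (y \<oplus> a) = (((x \<oplus> a) \<sqinter> (y \<oplus> a)) \<oplus> neg a) \<oplus> a"
    by (metis add_assoc neg_add_cancel add_0_right)
  also have "((x \<oplus> a) \<sqinter> (y \<oplus> a)) \<oplus> neg a \<preceq> x \<sqinter> y"
    by (metis add_assoc le_meet_iff meet_le1 meet_le2 add_neg_cancel add_right_mono add_0_right)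
  hence "(((x \<oplus> a) \<sqinter> (y \<oplus> a)) \<oplus> neg a) \<oplus> a \<preceq> (x \<sqinter> y) \<oplus> a" by (rule add_right_mono)
  finally show "(x \<oplus> a) \<sqinter> (y \<oplus> a) \<preceq> (x \<sqinter> y) \<oplus> a" by simp
qed

lemma neg_join: "neg (x \<squnion> y) = neg x \<sqinter> neg y"
proof (rule le_antisym)
  show "neg (x \<squnion> y) \<preceq> neg x \<sqinter> neg y" by (simp add: le_meet_iff join_ge1 join_ge2 neg_le_neg)
  have "x \<squnion> y \<preceq> neg (neg x \<sqinter> neg y)"
    by (metis join_le_iff meet_le1 meet_le2 neg_le_neg_iff neg_neg)
  thus "neg x \<sqinter> neg y \<preceq> neg (x \<squnion> y)" by (metis neg_le_neg neg_neg)
qed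

lemma neg_meet: "neg (x \<sqinter> y) = neg x \<squnion> neg y"
  by (metis neg_join neg_neg)

lemma pos_part_meet_neg_part: "(x \<squnion> \<zero>) \<sqinter> (neg x \<squnion> \<zero>) = \<zero>"
proof -
  have "neg x \<squnion> \<zero> = neg x \<oplus> (\<zero> \<squnion> x)"
    by (metis add_join_distrib_left neg_add_cancel add_0_right)
  moreover have "(x \<squnion> \<zero>) \<sqinter> (neg x \<oplus> (x \<squnion> \<zero>)) = (\<zero> \<sqinter> neg x) \<oplus> (x \<squnion> \<zero>)"
    by (simp add: add_meet_distrib_right add_0_left)
  moreover have "\<zero> \<sqinter> neg x = neg (\<zero> \<squnion> x)" by (simp add: neg_join)
  ultimately show ?thesis by (metis join_comm neg_add_cancel)
qed

lemma meet_add_le: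
  assumes "\<zero> \<preceq> a" and "\<zero> \<preceq> b" and "\<zero> \<preceq> c"
  shows "a \<sqinter> (b \<oplus> c) \<preceq> (a \<sqinter> b) \<oplus> (a \<sqinter> c)"
proof -
  have expand: "(a \<sqinter> b) \<oplus> (a \<sqinter> c) = ((a \<oplus> a) \<sqinter> (b \<oplus> a)) \<sqinter> ((a \<oplus> c) \<sqinter> (b \<oplus> c))"
    by (simp add: add_meet_distrib_left add_meet_distrib_right meet_assoc meet_comm)
  have "a \<preceq> a \<oplus> a" using add_left_mono[OF assms(1), of a] add_0_right by simp
  moreover have "a \<preceq> b \<oplus> a" using add_right_mono[OF assms(2), of a] add_0_left by simp
  moreover have "a \<preceq> a \<oplus> c" using add_left_mono[OF assms(3), of a] add_0_right by simp
  ultimately show ?thesis unfolding expand by (meson le_meet_iff meet_le1 meet_le2 le_trans)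
qed

lemma abs_nonneg: "\<zero> \<preceq> x \<squnion> neg x"
proof -
  let ?a = "x \<squnion> neg x"
  have "x \<oplus> neg x \<preceq> ?a \<oplus> ?a" by (rule add_mono) (simp_all add: join_ge1 join_ge2)
  hence double: "\<zero> \<preceq> ?a \<oplus> ?a" by (simp add: add_neg_cancel)
  have "(?a \<sqinter> \<zero>) \<oplus> (?a \<sqinter> \<zero>) = ((?a \<oplus> ?a) \<sqinter> (\<zero> \<oplus> ?a)) \<sqinter> ((?a \<oplus> \<zero>) \<sqinter> (\<zero> \<oplus> \<zero>))"
    by (simp add: add_meet_distrib_left add_meet_distrib_right meet_assoc)
  also have "\<dots> = (?a \<sqinter> \<zero>) \<oplus> \<zero>"
    using double unfolding add_0_left add_0_right le_def by (metis meet_assoc meet_comm meet_idem)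
  finally have "?a \<sqinter> \<zero> = \<zero>" by (rule add_left_cancel)
  thus ?thesis unfolding le_def by (simp add: meet_comm)
qed

lemma abs_of_nonneg: "\<zero> \<preceq> x \<Longrightarrow> x \<squnion> neg x = x"
  by (metis join_comm le_iff_join le_trans neg_le_neg neg_zero)

definition nsm :: "nat \<Rightarrow> 'a \<Rightarrow> 'a" where "nsm n a = ((\<oplus>) a ^^ n) \<zero>"

lemma nsm_0 [simp]: "nsm 0 a = \<zero>" by (simp add: nsm_def)
lemma nsm_Suc: "nsm (Suc n) a = a \<oplus> nsm n a" by (simp add: nsm_def)
lemma nsm_add_commute: "nsm n a \<oplus> a = a \<oplus> nsm n a"
  by (induction n) (simp_all add: nsm_Suc add_0_left add_0_right add_assoc)
lemma nsm_mono: "x \<preceq> y \<Longrightarrow> nsm n x \<preceq> nsm n y"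
  by (induction n) (simp_all add: nsm_Suc add_mono)
lemma nsm_nonneg: "\<zero> \<preceq> x \<Longrightarrow> \<zero> \<preceq> nsm n x"
  by (induction n) (use add_mono[of \<zero> x \<zero>] add_0_left in \<open>simp_all add: nsm_Suc\<close>)

lemma disjoint_nsm:
  assumes a: "\<zero> \<preceq> a" and b: "\<zero> \<preceq> b" and ab: "a \<sqinter> b = \<zero>"
  shows "a \<sqinter> nsm n b = \<zero>"
proof (induction n)
  case 0
  show ?case using a by (simp add: le_def meet_comm)
next
  case (Suc n)
  have "a \<sqinter> (b \<oplus> nsm n b) \<preceq> (a \<sqinter> b) \<oplus> (a \<sqinter> nsm n b)"
    using meet_add_le[OF a b nsm_nonneg[OF b]] .
  also have "\<dots> = \<zero>" using Suc ab add_0_left by metis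
  finally have "a \<sqinter> nsm (Suc n) b \<preceq> \<zero>" unfolding nsm_Suc .
  moreover have "\<zero> \<preceq> a \<sqinter> nsm (Suc n) b" using a nsm_nonneg[OF b] meet_greatest by blast
  ultimately show ?case by (rule le_antisym)
qed

definition is_lub :: "'a set \<Rightarrow> 'a \<Rightarrow> bool" where
  "is_lub S s \<longleftrightarrow> (\<forall>x\<in>S. x \<preceq> s) \<and> (\<forall>u. (\<forall>x\<in>S. x \<preceq> u) \<longrightarrow> s \<preceq> u)"

lemma is_lub_unique: "is_lub S s \<Longrightarrow> is_lub S t \<Longrightarrow> s = t"
  unfolding is_lub_def by (meson le_antisym)
lemma is_lub_upper: "is_lub S s \<Longrightarrow> x \<in> S \<Longrightarrow> x \<preceq> s"
  unfolding is_lub_def by blast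
lemma is_lub_least: "is_lub S s \<Longrightarrow> (\<And>x. x \<in> S \<Longrightarrow> x \<preceq> u) \<Longrightarrow> s \<preceq> u"
  unfolding is_lub_def by blast
lemma is_lubI:
  "(\<And>x. x \<in> S \<Longrightarrow> x \<preceq> s) \<Longrightarrow> (\<And>u. (\<And>x. x \<in> S \<Longrightarrow> x \<preceq> u) \<Longrightarrow> s \<preceq> u) \<Longrightarrow> is_lub S s"
  unfolding is_lub_def by blast
lemma is_lub_insert: "is_lub S s \<Longrightarrow> is_lub (insert a S) (a \<squnion> s)"
  unfolding is_lub_def by (auto simp: join_le_iff join_ge1 join_ge2 intro: le_trans[OF _ join_ge2])

lemma neg_add_meet_nonneg:
  assumes "\<zero> \<preceq> u"
  shows "(neg (a \<sqinter> m) \<oplus> a) \<sqinter> u = neg (a \<sqinter> m) \<oplus> (a \<sqinter> (m \<oplus> u))"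
proof (rule add_left_cancel[of "a \<sqinter> m"])
  have "(a \<sqinter> m) \<oplus> ((neg (a \<sqinter> m) \<oplus> a) \<sqinter> u) = a \<sqinter> ((a \<sqinter> m) \<oplus> u)"
    by (simp add: add_meet_distrib_left add_assoc[symmetric] add_neg_cancel add_0_left)
  also have "\<dots> = a \<sqinter> ((a \<oplus> u) \<sqinter> (m \<oplus> u))" by (simp add: add_meet_distrib_right)
  also have "\<dots> = a \<sqinter> (m \<oplus> u)"
    using add_left_mono[OF assms, of a] unfolding le_def add_0_right by (metis meet_assoc)
  finally show "(a \<sqinter> m) \<oplus> ((neg (a \<sqinter> m) \<oplus> a) \<sqinter> u)
      = (a \<sqinter> m) \<oplus> (neg (a \<sqinter> m) \<oplus> (a \<sqinter> (m \<oplus> u)))"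
    by (simp add: add_assoc[symmetric] add_neg_cancel add_0_left)
qed

lemma is_lub_meet_multiples_weak_unit:
  assumes u0: "\<zero> \<preceq> u" and weak: "\<And>f. f \<sqinter> u = \<zero> \<Longrightarrow> f = \<zero>" and a0: "\<zero> \<preceq> a"
    and lub: "is_lub (range (\<lambda>n. (a \<sqinter> nsm (Suc n) u) \<sqinter> a)) s"
  shows "s = a"
proof -
  define c where "c n = a \<sqinter> nsm (Suc n) u" for n
  have c_le_a: "c n \<sqinter> a = c n" for n unfolding c_def by (metis meet_assoc meet_comm meet_idem)
  have c_le_s: "c n \<preceq> s" for n
    using is_lub_upper[OF lub, of "c n \<sqinter> a"] c_le_a unfolding c_def by auto
  have s_le_a: "s \<preceq> a" by (rule is_lub_least[OF lub]) (auto simp: meet_le2)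
  have c_Suc: "(neg (c n) \<oplus> a) \<sqinter> u = neg (c n) \<oplus> c (Suc n)" for n
    using neg_add_meet_nonneg[OF u0, of a "nsm (Suc n) u"]
    by (simp add: c_def nsm_add_commute nsm_Suc[of "Suc n"])
  define x where "x = (neg s \<oplus> a) \<sqinter> u"
  have c_le: "c n \<preceq> s \<oplus> neg x" for n
  proof -
    have "x \<preceq> (neg (c n) \<oplus> a) \<sqinter> u"
      unfolding x_def using add_right_mono[OF neg_le_neg[OF c_le_s[of n]], of a]
      by (meson le_meet_iff meet_le1 meet_le2 le_trans)
    also have "\<dots> \<preceq> neg (c n) \<oplus> s" unfolding c_Suc by (rule add_left_mono[OF c_le_s])
    finally have "c n \<oplus> x \<preceq> c n \<oplus> (neg (c n) \<oplus> s)" by (rule add_left_mono)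
    hence "c n \<oplus> x \<preceq> s" by (simp add: add_assoc[symmetric] add_neg_cancel add_0_left)
    hence "c n \<oplus> x \<oplus> neg x \<preceq> s \<oplus> neg x" by (rule add_right_mono)
    thus ?thesis by (simp add: add_assoc add_neg_cancel add_0_right)
  qed
  have "s \<oplus> \<zero> \<preceq> s \<oplus> neg x"
    unfolding add_0_right
    by (rule is_lub_least[OF lub]) (use c_le c_le_a in \<open>auto simp: c_def\<close>)
  hence "x \<preceq> \<zero>" by (metis add_le_add_left_iff neg_le_neg_iff neg_zero)
  moreover have "\<zero> \<preceq> x"
    unfolding x_def using add_left_mono[OF s_le_a, of "neg s"] u0 neg_add_cancel
    by (metis meet_greatest)
  ultimately have "neg s \<oplus> a = \<zero>" unfolding x_def by (metis le_antisym weak)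
  thus "s = a" by (metis add_assoc add_neg_cancel add_0_left add_0_right)
qed

lemma is_lub_of_bigv_axioms:
  assumes A1: "\<And>g f. B g f = B g (\<lambda>n. f n \<sqinter> g)"
    and A2: "\<And>g f. B g f = (f 0 \<sqinter> g) \<squnion> B g (\<lambda>n. f (Suc n))"
    and A3: "\<And>g f h. B g (\<lambda>n. f n \<sqinter> h) \<preceq> h"
  shows "is_lub (range (\<lambda>n. f n \<sqinter> g)) (B g f)"
proof (rule is_lubI)
  have upper: "\<And>f. f n \<sqinter> g \<preceq> B g f" for n
  proof (induction n)
    case 0
    show ?case by (subst A2) (rule join_ge1)
  next
    case (Suc n)
    have "f (Suc n) \<sqinter> g \<preceq> B g (\<lambda>n. f (Suc n))" using Suc[of "\<lambda>n. f (Suc n)"] by simp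
    also have "\<dots> \<preceq> B g f" by (subst (2) A2) (rule join_ge2)
    finally show ?case .
  qed
  show "x \<preceq> B g f" if "x \<in> range (\<lambda>n. f n \<sqinter> g)" for x using that upper by auto
  fix u assume "\<And>x. x \<in> range (\<lambda>n. f n \<sqinter> g) \<Longrightarrow> x \<preceq> u"
  hence "\<And>n. (f n \<sqinter> g) \<sqinter> u = f n \<sqinter> g" unfolding le_def by auto
  hence "B g f = B g (\<lambda>n. (f n \<sqinter> g) \<sqinter> u)" by (subst A1) simp
  thus "B g f \<preceq> u" using A3 by simp
qed

lemma weak_unit_of_is_lub_meet_multiples:
  assumes lub: "\<And>g f. is_lub (range (\<lambda>n. f n \<sqinter> g)) (B g f)"
    and unit: "\<And>f. B (f \<squnion> neg f) (\<lambda>n. (f \<squnion> neg f) \<sqinter> nsm (Suc n) u) = f \<squnion> neg f"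
  shows "\<zero> \<preceq> u" and "\<And>f. f \<sqinter> u = \<zero> \<Longrightarrow> f = \<zero>"
proof -
  have vanish: "a = \<zero>" if a0: "\<zero> \<preceq> a" and "\<And>n. a \<sqinter> nsm (Suc n) u \<preceq> \<zero>" for a
  proof -
    have "a = B a (\<lambda>n. a \<sqinter> nsm (Suc n) u)" using unit[of a] abs_of_nonneg[OF a0] by simp
    also have "\<dots> \<preceq> \<zero>"
      by (rule is_lub_least[OF lub]) (auto intro: le_trans[OF meet_le1] that)
    finally show ?thesis using a0 le_antisym by blast
  qed
  define N where "N = neg u \<squnion> \<zero>"
  define P where "P = u \<squnion> \<zero>"
  have N0: "\<zero> \<preceq> N" and P0: "\<zero> \<preceq> P" unfolding N_def P_def by (simp_all add: join_ge2)
  have NP: "N \<sqinter> P = \<zero>" unfolding N_def P_def using pos_part_meet_neg_part[of u] by (simp add: meet_comm)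
  have "N = \<zero>"
  proof (rule vanish[OF N0])
    fix n
    have "N \<sqinter> nsm (Suc n) u \<preceq> N \<sqinter> nsm (Suc n) P"
      unfolding P_def by (intro meet_greatest meet_le1 le_trans[OF meet_le2] nsm_mono join_ge1)
    also have "\<dots> = \<zero>" by (rule disjoint_nsm[OF N0 P0 NP])
    finally show "N \<sqinter> nsm (Suc n) u \<preceq> \<zero>" .
  qed
  hence "u \<sqinter> \<zero> = \<zero>" unfolding N_def by (metis neg_meet neg_neg neg_zero)
  thus u0: "\<zero> \<preceq> u" unfolding le_def by (simp add: meet_comm)
  fix f assume fu: "f \<sqinter> u = \<zero>"
  have f0: "\<zero> \<preceq> f" using meet_le1[of f u] fu by simp
  show "f = \<zero>" by (rule vanish[OF f0]) (simp add: disjoint_nsm[OF f0 u0 fu])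
qed

end

lemma lattice_group_of_lgroup_ax:
  "lgroup_ax G \<Longrightarrow> lattice_group (zer G) (pls G) (ng G) (jn G) (mt G)"
  unfolding lgroup_ax_def lattice_group_def by blast

lemma leq_eq_le: "lgroup_ax G \<Longrightarrow> leq G = lattice_group.le (mt G)"
  by (intro ext) (simp add: leq_def lattice_group.le_def[OF lattice_group_of_lgroup_ax])
lemma is_sup_eq_is_lub: "lgroup_ax G \<Longrightarrow> is_sup G = lattice_group.is_lub (mt G)"
  by (intro ext)
    (simp add: is_sup_def lattice_group.is_lub_def[OF lattice_group_of_lgroup_ax] leq_eq_le)
lemma nsmul_eq_nsm: "lgroup_ax G \<Longrightarrow> nsmul G = lattice_group.nsm (zer G) (pls G)"
  by (intro ext) (simp add: nsmul_def lattice_group.nsm_def[OF lattice_group_of_lgroup_ax])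

lemma Fu_simps [simp]:
  "zer (Fu G) = zer G" "pls (Fu G) = pls G" "ng (Fu G) = ng G"
  "jn (Fu G) = jn G" "mt (Fu G) = mt G" "unt (Fu G) = unt G"
  "bigv (Fu G) = (\<lambda>g f. THE s. is_sup G (range (\<lambda>n. mt G (f n) g)) s)"
  by (simp_all add: Fu_def)

lemma Uu_simps [simp]:
  "zer (Uu A) = zer A" "pls (Uu A) = pls A" "ng (Uu A) = ng A"
  "jn (Uu A) = jn A" "mt (Uu A) = mt A" "unt (Uu A) = unt A"
  by (simp_all add: Uu_def)

lemma leq_Fu: "leq (Fu G) = leq G" by (intro ext) (simp add: leq_def)
lemma leq_Uu: "leq (Uu A) = leq A" by (intro ext) (simp add: leq_def)
lemma is_sup_Uu: "is_sup (Uu A) = is_sup A" by (intro ext) (simp add: is_sup_def leq_Uu)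
lemma nsmul_Fu: "nsmul (Fu G) = nsmul G" by (intro ext) (simp add: nsmul_def)
lemma absv_Fu: "absv (Fu G) = absv G" by (intro ext) (simp add: absv_def)

lemma range_eq_insert_0_Suc: "range f = insert (f 0) (range (\<lambda>n. f (Suc n)))"
  by (auto simp: image_iff) (metis old.nat.exhaust)

lemma is_sup_bigv_Fu:
  assumes "sigma_obj G"
  shows "is_sup G (range (\<lambda>n. mt G (f n) g)) (bigv (Fu G) g f)"
proof -
  have lg: "lgroup_ax G" and sc: "sigma_complete G" using assms sigma_obj_def by auto
  interpret lattice_group "zer G" "pls G" "ng G" "jn G" "mt G"
    by (rule lattice_group_of_lgroup_ax[OF lg])
  have "\<exists>u. \<forall>n. leq G (mt G (f n) g) u" using meet_le2 unfolding leq_eq_le[OF lg] by blast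
  then obtain s where s: "is_sup G (range (\<lambda>n. mt G (f n) g)) s"
    using sc[unfolded sigma_complete_def, rule_format, of "\<lambda>n. mt G (f n) g"] by blast
  hence "(THE s. is_sup G (range (\<lambda>n. mt G (f n) g)) s) = s"
    using is_lub_unique unfolding is_sup_eq_is_lub[OF lg] by blast
  thus ?thesis using s by simp
qed

lemma is_sup_bigv_of_vobj:
  assumes "vobj A"
  shows "is_sup A (range (\<lambda>n. mt A (f n) g)) (bigv A g f)"
proof -
  have lg: "lgroup_ax A"
    and A1: "\<And>g f. bigv A g f = bigv A g (\<lambda>n. mt A (f n) g)"
    and A2: "\<And>g f. bigv A g f = jn A (mt A (f 0) g) (bigv A g (\<lambda>n. f (Suc n)))"
    and A3: "\<And>g f h. leq A (bigv A g (\<lambda>n. mt A (f n) h)) h"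
    using assms unfolding vobj_def by blast+
  interpret lattice_group "zer A" "pls A" "ng A" "jn A" "mt A"
    by (rule lattice_group_of_lgroup_ax[OF lg])
  show ?thesis
    using is_lub_of_bigv_axioms[OF A1 A2 A3[unfolded leq_eq_le[OF lg]]]
    by (simp add: is_sup_eq_is_lub[OF lg])
qed

lemma vobj_Fu:
  assumes G: "sigma_obj G"
  shows "vobj (Fu G)"
proof -
  have lg: "lgroup_ax G" and wu: "weak_unit G (unt G)" using G sigma_obj_def by auto
  interpret lattice_group "zer G" "pls G" "ng G" "jn G" "mt G"
    by (rule lattice_group_of_lgroup_ax[OF lg])
  have lub: "is_lub (range (\<lambda>n. mt G (f n) g)) (bigv (Fu G) g f)" for g f
    using is_sup_bigv_Fu[OF G] is_sup_eq_is_lub[OF lg] by metis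
  have "lgroup_ax (Fu G)" using lg unfolding lgroup_ax_def Fu_simps .
  moreover have "bigv (Fu G) g f = bigv (Fu G) g (\<lambda>n. mt (Fu G) (f n) g)" for g f
    by (simp add: meet_assoc meet_idem)
  moreover have "bigv (Fu G) g f = jn (Fu G) (mt (Fu G) (f 0) g) (bigv (Fu G) g (\<lambda>n. f (Suc n)))"
    for g f
    using is_lub_insert[OF lub[of "\<lambda>n. f (Suc n)" g], of "mt G (f 0) g"]
      range_eq_insert_0_Suc[of "\<lambda>n. mt G (f n) g"] is_lub_unique[OF lub[of f g]]
    by (simp del: Fu_simps(7))
  moreover have "leq (Fu G) (bigv (Fu G) g (\<lambda>n. mt (Fu G) (f n) h)) h" for g f h
    unfolding leq_Fu leq_eq_le[OF lg] Fu_simps(5)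
    by (rule is_lub_least[OF lub]) (auto intro: le_trans[OF meet_le1 meet_le2])
  moreover have "bigv (Fu G) (absv (Fu G) f)
      (\<lambda>n. mt (Fu G) (absv (Fu G) f) (nsmul (Fu G) (Suc n) (unt (Fu G)))) = absv (Fu G) f" for f
    using is_lub_meet_multiples_weak_unit[OF _ _ abs_nonneg lub] wu
    by (simp add: weak_unit_def leq_eq_le[OF lg] absv_Fu nsmul_Fu nsmul_eq_nsm[OF lg] absv_def)
  ultimately show ?thesis unfolding vobj_def by blast
qed

lemma sigma_obj_Uu:
  assumes A: "vobj A"
  shows "sigma_obj (Uu A)"
proof -
  have lg: "lgroup_ax A"
    and unit: "\<And>f. bigv A (absv A f) (\<lambda>n. mt A (absv A f) (nsmul A (Suc n) (unt A))) = absv A f"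
    using A unfolding vobj_def by blast+
  interpret lattice_group "zer A" "pls A" "ng A" "jn A" "mt A"
    by (rule lattice_group_of_lgroup_ax[OF lg])
  have lub: "is_lub (range (\<lambda>n. mt A (f n) g)) (bigv A g f)" for g f
    using is_sup_bigv_of_vobj[OF A] is_sup_eq_is_lub[OF lg] by metis
  have "lgroup_ax (Uu A)" using lg unfolding lgroup_ax_def Uu_simps .
  moreover have "sigma_complete (Uu A)"
    unfolding sigma_complete_def leq_Uu is_sup_Uu
  proof (intro allI impI)
    fix f :: "nat \<Rightarrow> 'a"
    assume "\<exists>u. \<forall>n. leq A (f n) u"
    then obtain u where "\<And>n. mt A (f n) u = f n" by (auto simp: leq_def)
    thus "\<exists>s. is_sup A (range f) s" using is_sup_bigv_of_vobj[OF A, of f u] by auto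
  qed
  moreover
  have "bigv A (jn A f (ng A f)) (\<lambda>n. mt A (jn A f (ng A f)) (nsm (Suc n) (unt A)))
      = jn A f (ng A f)" for f
    using unit[of f] by (simp add: absv_def nsmul_eq_nsm[OF lg])
  with weak_unit_of_is_lub_meet_multiples[OF lub]
  have "weak_unit (Uu A) (unt (Uu A))"
    unfolding weak_unit_def Uu_simps leq_Uu leq_eq_le[OF lg] by blast
  ultimately show ?thesis unfolding sigma_obj_def by blast
qed

lemma add_hom_zero:
  assumes "lgroup_ax G" "lgroup_ax H" "\<And>x y. h (pls G x y) = pls H (h x) (h y)"
  shows "h (zer G) = zer H"
proof -
  interpret g: lattice_group "zer G" "pls G" "ng G" "jn G" "mt G"
    by (rule lattice_group_of_lgroup_ax[OF assms(1)])
  interpret k: lattice_group "zer H" "pls H" "ng H" "jn H" "mt H"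
    by (rule lattice_group_of_lgroup_ax[OF assms(2)])
  show ?thesis
    by (rule k.add_left_cancel[of "h (zer G)"]) (metis assms(3) g.add_0_left k.add_0_right)
qed

lemma add_hom_neg:
  assumes "lgroup_ax G" "lgroup_ax H" "\<And>x y. h (pls G x y) = pls H (h x) (h y)"
  shows "h (ng G x) = ng H (h x)"
proof -
  interpret g: lattice_group "zer G" "pls G" "ng G" "jn G" "mt G"
    by (rule lattice_group_of_lgroup_ax[OF assms(1)])
  interpret k: lattice_group "zer H" "pls H" "ng H" "jn H" "mt H"
    by (rule lattice_group_of_lgroup_ax[OF assms(2)])
  show ?thesis
    by (rule k.add_right_cancel[of _ "h x"]) (metis assms add_hom_zero g.neg_add_cancel k.neg_add_cancel)
qed

lemma vmor_Fu:
  assumes G: "sigma_obj G" and H: "sigma_obj H" and h: "sigma_mor G H h"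
  shows "vmor (Fu G) (Fu H) h"
proof -
  have lG: "lgroup_ax G" and lH: "lgroup_ax H" using G H sigma_obj_def by auto
  have hp: "\<And>x y. h (pls G x y) = pls H (h x) (h y)"
    and hmt: "\<And>x y. h (mt G x y) = mt H (h x) (h y)"
    and cont: "sigma_cont G H h"
    using h unfolding sigma_mor_def lmorph_def by blast+
  interpret k: lattice_group "zer H" "pls H" "ng H" "jn H" "mt H"
    by (rule lattice_group_of_lgroup_ax[OF lH])
  have "h (bigv (Fu G) g f) = bigv (Fu H) (h g) (h \<circ> f)" for g f
  proof -
    have "h \<circ> (\<lambda>n. mt G (f n) g) = (\<lambda>n. mt H ((h \<circ> f) n) (h g))" by (simp add: hmt comp_def)
    hence "is_sup H (range (\<lambda>n. mt H ((h \<circ> f) n) (h g))) (h (bigv (Fu G) g f))"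
      using cont is_sup_bigv_Fu[OF G] unfolding sigma_cont_def by metis
    with is_sup_bigv_Fu[OF H] show ?thesis
      unfolding is_sup_eq_is_lub[OF lH] by (metis k.is_lub_unique)
  qed
  with h add_hom_zero[OF lG lH hp] add_hom_neg[OF lG lH hp] show ?thesis
    unfolding vmor_def sigma_mor_def lmorph_def Fu_simps(1-6) by blast
qed

lemma sigma_mor_Uu:
  assumes A: "vobj A" and B: "vobj B" and h: "vmor A B h"
  shows "sigma_mor (Uu A) (Uu B) h"
proof -
  have lA: "lgroup_ax A" using A by (simp add: vobj_def)
  interpret a: lattice_group "zer A" "pls A" "ng A" "jn A" "mt A"
    by (rule lattice_group_of_lgroup_ax[OF lA])
  have hmt: "\<And>x y. h (mt A x y) = mt B (h x) (h y)"
    and hb: "\<And>g f. h (bigv A g f) = bigv B (h g) (h \<circ> f)"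
    using h unfolding vmor_def by blast+
  have "sigma_cont (Uu A) (Uu B) h"
    unfolding sigma_cont_def is_sup_Uu
  proof (intro allI impI)
    fix f :: "nat \<Rightarrow> 'a" and s
    assume s: "is_sup A (range f) s"
    have fs: "mt A (f n) s = f n" for n using s unfolding is_sup_def leq_def by blast
    have "bigv A s f = s"
      using is_sup_bigv_of_vobj[OF A, of f s] s a.is_lub_unique
      unfolding fs is_sup_eq_is_lub[OF lA] by blast
    hence "bigv B (h s) (h \<circ> f) = h s" using hb[of s f] by simp
    moreover have "(\<lambda>n. mt B ((h \<circ> f) n) (h s)) = h \<circ> f" by (rule ext) (simp add: hmt[symmetric] fs)
    ultimately show "is_sup B (range (h \<circ> f)) (h s)"
      using is_sup_bigv_of_vobj[OF B, of "h \<circ> f" "h s"] by (simp only: comp_apply)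
  qed
  with h show ?thesis unfolding sigma_mor_def lmorph_def vmor_def Uu_simps by blast
qed

lemma Uu_Fu: "Uu (Fu G) = G"
  by (simp add: Uu_def Fu_def)

lemma Fu_Uu:
  assumes A: "vobj A"
  shows "Fu (Uu A) = A"
proof -
  have lA: "lgroup_ax A" using A by (simp add: vobj_def)
  interpret a: lattice_group "zer A" "pls A" "ng A" "jn A" "mt A"
    by (rule lattice_group_of_lgroup_ax[OF lA])
  have "bigv A g f = (THE s. is_sup A (range (\<lambda>n. mt A (f n) g)) s)" for g f
    using is_sup_bigv_of_vobj[OF A] a.is_lub_unique unfolding is_sup_eq_is_lub[OF lA]
    by (metis (no_types, lifting) the_equality)
  hence "bigv A = (\<lambda>g f. THE s. is_sup A (range (\<lambda>n. mt A (f n) g)) s)" by (intro ext)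
  thus ?thesis unfolding Fu_def Uu_simps is_sup_Uu by simp
qed

theorem mainTheorem2:
  shows "(\<forall>G :: 'a lgu. sigma_obj G \<longrightarrow> vobj (Fu G)) \<and>
         (\<forall>A :: 'a vslu. vobj A \<longrightarrow> sigma_obj (Uu A)) \<and>
         (\<forall>(G :: 'a lgu) (H :: 'b lgu) h. sigma_obj G \<and> sigma_obj H \<and> sigma_mor G H h
              \<longrightarrow> vmor (Fu G) (Fu H) h) \<and>
         (\<forall>(A :: 'a vslu) (B :: 'b vslu) h. vobj A \<and> vobj B \<and> vmor A B h
              \<longrightarrow> sigma_mor (Uu A) (Uu B) h) \<and>
         (\<forall>G :: 'a lgu. sigma_obj G \<longrightarrow> Uu (Fu G) = G) \<and>
         (\<forall>A :: 'a vslu. vobj A \<longrightarrow> Fu (Uu A) = A)"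
  by (blast intro: vobj_Fu sigma_obj_Uu vmor_Fu sigma_mor_Uu Uu_Fu Fu_Uu)

end
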